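(* If $v_1$ and $v_2$ are submodular valuations on a finite set $X$ with disjoint supports (i.e., $v_i(\{x\})>0$ implies $v_j(\{x\})=0$ for $\{i,j\}=\{1,2\}$), then $v_1\vee v_2$ is submodular.
   Context: A valuation on a finite set $X$ is a function $v:2^X\to\mathbb{R}_{\ge 0}$ with $v(\emptyset)=0$ and monotone under inclusion; it is submodular if $v(A)+v(B)\ge v(A\cup B)+v(A\cap B)$ for all $A,B\subseteq X$. $(v_1\vee v_2)(S)=\max_{T\subseteq S}(v_1(T)+v_2(S\setminus T))$. *)

theory Defs
  imports Main "HOL-Library.Extended_Real"
begin

definition valuation :: "'a set \<Rightarrow> ('a set \<Rightarrow> real) \<Rightarrow> bool" where
  "valuation X v \<longleftrightarrow> v {} = 0 \<and> (\<forall>A. A \<subseteq> X \<longrightarrow> v A \<ge> 0) \<and>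
     (\<forall>A B. A \<subseteq> B \<and> B \<subseteq> X \<longrightarrow> v A \<le> v B)"

definition submodular :: "'a set \<Rightarrow> ('a set \<Rightarrow> real) \<Rightarrow> bool" where
  "submodular X v \<longleftrightarrow> (\<forall>A B. A \<subseteq> X \<and> B \<subseteq> X \<longrightarrow> v A + v B \<ge> v (A \<union> B) + v (A \<inter> B))"

definition join :: "('a set \<Rightarrow> real) \<Rightarrow> ('a set \<Rightarrow> real) \<Rightarrow> 'a set \<Rightarrow> real" where
  "join v1 v2 S = Max ((\<lambda>T. v1 T + v2 (S - T)) ` Pow S)"

end

theory Submission
  imports Defs
begin

text \<open>Adding elements with null singleton value does not change a submodular valuation:
  if \<open>v {x} = 0\<close> and \<open>x \<notin> A\<close>, submodularity gives \<open>v (A \<union> {x}) \<le> v A\<close>, and monotonicity the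
  converse. With disjoint supports, a set \<open>S\<close> therefore splits as \<open>T \<union> (S - T)\<close>, where \<open>T\<close> is the
  support of \<open>v1\<close> in \<open>S\<close>, with \<open>v1 T = v1 S\<close> and \<open>v2 (S - T) = v2 S\<close>. Since by monotonicity no split
  exceeds \<open>v1 S + v2 S\<close>, the join is just the sum \<open>v1 + v2\<close> on subsets of \<open>X\<close>, and a sum of
  submodular functions is submodular.\<close>

lemma submodularD:
  "submodular X v \<Longrightarrow> A \<subseteq> X \<Longrightarrow> B \<subseteq> X \<Longrightarrow> v (A \<union> B) + v (A \<inter> B) \<le> v A + v B"
  unfolding submodular_def by blast

lemma valuation_empty: "valuation X v \<Longrightarrow> v {} = 0"
  unfolding valuation_def by blast

lemma valuation_nonneg: "valuation X v \<Longrightarrow> A \<subseteq> X \<Longrightarrow> 0 \<le> v A"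
  unfolding valuation_def by blast

lemma valuation_mono: "valuation X v \<Longrightarrow> A \<subseteq> B \<Longrightarrow> B \<subseteq> X \<Longrightarrow> v A \<le> v B"
  unfolding valuation_def by blast

lemma valuation_insert_null:
  assumes val: "valuation X v" and sm: "submodular X v"
    and AX: "A \<subseteq> X" and xX: "x \<in> X" and null: "v {x} = 0"
  shows "v (insert x A) = v A"
proof (cases "x \<in> A")
  case True
  then show ?thesis by (simp add: insert_absorb)
next
  case False
  then have "v (insert x A) + v {} \<le> v A + v {x}"
    using submodularD[OF sm AX, of "{x}"] xX by simp
  moreover have "v A \<le> v (insert x A)"
    using valuation_mono[OF val] AX xX by blast
  ultimately show ?thesis using valuation_empty[OF val] null by simp
qed

lemma valuation_union_null:
  assumes val: "valuation X v" and sm: "submodular X v"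
    and fin: "finite N" and NX: "N \<subseteq> X" and AX: "A \<subseteq> X"
    and null: "\<forall>x\<in>N. v {x} = 0"
  shows "v (A \<union> N) = v A"
  using fin NX null
proof (induction N rule: finite_induct)
  case empty
  then show ?case by simp
next
  case (insert x N)
  have "v (insert x (A \<union> N)) = v (A \<union> N)"
    using insert.prems AX by (intro valuation_insert_null[OF val sm]) auto
  then show ?case using insert.IH insert.prems by simp
qed

lemma valuation_eq_on_support:
  assumes val: "valuation X v" and sm: "submodular X v" and fin: "finite S" and SX: "S \<subseteq> X"
  shows "v S = v {x\<in>S. v {x} > 0}"
proof -
  define T where "T = {x\<in>S. v {x} > 0}"
  have TX: "T \<subseteq> X" and NX: "S - T \<subseteq> X"
    using SX unfolding T_def by auto
  have null: "\<forall>x\<in>S - T. v {x} = 0"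
  proof
    fix x assume "x \<in> S - T"
    then have "{x} \<subseteq> X" and "\<not> v {x} > 0" using SX unfolding T_def by auto
    then show "v {x} = 0" using valuation_nonneg[OF val, of "{x}"] by linarith
  qed
  have "v (T \<union> (S - T)) = v T"
    using valuation_union_null[OF val sm finite_Diff[OF fin] NX TX null] .
  moreover have "T \<union> (S - T) = S" unfolding T_def by blast
  ultimately have "v S = v T" by simp
  then show ?thesis by (simp only: T_def)
qed

lemma join_le_add:
  assumes "valuation X v1" and "valuation X v2" and "finite S" and "S \<subseteq> X"
  shows "join v1 v2 S \<le> v1 S + v2 S"
  unfolding join_def
proof (rule Max.boundedI)
  fix y assume "y \<in> (\<lambda>T. v1 T + v2 (S - T)) ` Pow S"
  then obtain T where "T \<subseteq> S" and y: "y = v1 T + v2 (S - T)" by blast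
  then have "v1 T \<le> v1 S" and "v2 (S - T) \<le> v2 S"
    using valuation_mono[OF assms(1)] valuation_mono[OF assms(2)] \<open>S \<subseteq> X\<close> by auto
  then show "y \<le> v1 S + v2 S" using y by simp
qed (use \<open>finite S\<close> in auto)

lemma join_ge_split:
  assumes "finite S" and "T \<subseteq> S"
  shows "v1 T + v2 (S - T) \<le> join v1 v2 S"
  unfolding join_def using assms by (intro Max_ge) auto

lemma join_eq_add_disjoint_support:
  assumes fin: "finite X"
    and val1: "valuation X v1" and val2: "valuation X v2"
    and sm1: "submodular X v1" and sm2: "submodular X v2"
    and disj: "\<forall>x\<in>X. v1 {x} > 0 \<longrightarrow> v2 {x} = 0"
    and SX: "S \<subseteq> X"
  shows "join v1 v2 S = v1 S + v2 S"
proof -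
  define T where "T = {x\<in>S. v1 {x} > 0}"
  have finS: "finite S" using finite_subset[OF SX fin] .
  have "v1 S = v1 T"
    unfolding T_def by (rule valuation_eq_on_support[OF val1 sm1 finS SX])
  moreover have "v2 (S - T \<union> T) = v2 (S - T)"
  proof (rule valuation_union_null[OF val2 sm2])
    show "finite T" and "T \<subseteq> X" and "S - T \<subseteq> X" and "\<forall>x\<in>T. v2 {x} = 0"
      using finS SX disj unfolding T_def by auto
  qed
  moreover have "S - T \<union> T = S" unfolding T_def by blast
  moreover have "v1 T + v2 (S - T) \<le> join v1 v2 S"
    by (rule join_ge_split[OF finS]) (auto simp: T_def)
  ultimately have "v1 S + v2 S \<le> join v1 v2 S" by simp
  then show ?thesis using join_le_add[OF val1 val2 finS SX] by simp
qed

lemma submodular_add: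
  assumes "submodular X v1" and "submodular X v2"
  shows "submodular X (\<lambda>S. v1 S + v2 S)"
  unfolding submodular_def
proof (intro allI impI)
  fix A B assume "A \<subseteq> X \<and> B \<subseteq> X"
  then show "v1 (A \<union> B) + v2 (A \<union> B) + (v1 (A \<inter> B) + v2 (A \<inter> B)) \<le> v1 A + v2 A + (v1 B + v2 B)"
    using submodularD[OF assms(1), of A B] submodularD[OF assms(2), of A B] by simp
qed

lemma submodular_cong:
  assumes "\<And>S. S \<subseteq> X \<Longrightarrow> f S = g S"
  shows "submodular X f \<longleftrightarrow> submodular X g"
proof -
  have "f (A \<union> B) + f (A \<inter> B) \<le> f A + f B \<longleftrightarrow> g (A \<union> B) + g (A \<inter> B) \<le> g A + g B"
    if "A \<subseteq> X" and "B \<subseteq> X" for A B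
  proof -
    have "A \<union> B \<subseteq> X" and "A \<inter> B \<subseteq> X" using that by auto
    then show ?thesis using that assms by simp
  qed
  then show ?thesis unfolding submodular_def by blast
qed

theorem proposition4:
  fixes X :: "'a set" and v1 v2 :: "'a set \<Rightarrow> real"
  assumes "finite X"
    and "valuation X v1" and "valuation X v2"
    and "submodular X v1" and "submodular X v2"
    and "\<forall>x\<in>X. v1 {x} > 0 \<longrightarrow> v2 {x} = 0"
    and "\<forall>x\<in>X. v2 {x} > 0 \<longrightarrow> v1 {x} = 0"
  shows "submodular X (join v1 v2)"
proof -
  \<comment> \<open>By nonnegativity the last hypothesis is equivalent to the one before it.\<close>
  have "join v1 v2 S = v1 S + v2 S" if "S \<subseteq> X" for S
    using join_eq_add_disjoint_support[OF assms(1-6) that] .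
  then have "submodular X (join v1 v2) \<longleftrightarrow> submodular X (\<lambda>S. v1 S + v2 S)"
    by (rule submodular_cong)
  then show ?thesis using submodular_add[OF assms(4,5)] by simp
qed

end
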